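(* Let $P$ and $Q$ be upper primes. Then $PQ-QP$ lies in the two-sided ideal of $\mathcal{A}$ generated by $\{U(LR)-(LR)U : U \text{ an upper prime}\}$.
   Context: $\mathcal{A}$ is the free associative $\mathbb{C}$-algebra on noncommuting generators $L,R$; words are finite products of these letters. A word is balanced if it contains equally many $L$'s and $R$'s. A word is prime if it is nonempty, balanced, and not a product of two nonempty balanced words. For a balanced word $W=a_1\cdots a_n$, $e_k(W)=\sum_{i=1}^k\overline{a_i}$ with $\overline{R}=1$, $\overline{L}=-1$. A prime $P$ of length $n$ is an upper prime if $e_k(P)>0$ for all $1\le k\le n-1$. *)

theory Defs
  imports Complex_Main "HOL-Library.Poly_Mapping"
begin

datatype letter = L | R

type_synonym word = "letter list"

text \<open>The free associative C-algebra on L, R: finitely supported C-valued functions on words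
  (coefficient of each word), with concatenation-convolution as product.\<close>
type_synonym alg = "word \<Rightarrow>\<^sub>0 complex"

definition wd :: "word \<Rightarrow> alg" where
  "wd w = Poly_Mapping.single w 1"

definition amul :: "alg \<Rightarrow> alg \<Rightarrow> alg" where
  "amul p q = (\<Sum>u\<in>Poly_Mapping.keys p. \<Sum>v\<in>Poly_Mapping.keys q. Poly_Mapping.single (u @ v) (Poly_Mapping.lookup p u * Poly_Mapping.lookup q v))"

inductive_set ideal_gen :: "alg set \<Rightarrow> alg set" for S :: "alg set" where
  gen: "s \<in> S \<Longrightarrow> s \<in> ideal_gen S"
| zero: "0 \<in> ideal_gen S"
| add: "x \<in> ideal_gen S \<Longrightarrow> y \<in> ideal_gen S \<Longrightarrow> x + y \<in> ideal_gen S"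
| lmul: "x \<in> ideal_gen S \<Longrightarrow> amul a x \<in> ideal_gen S"
| rmul: "x \<in> ideal_gen S \<Longrightarrow> amul x a \<in> ideal_gen S"

definition balanced :: "word \<Rightarrow> bool" where
  "balanced w \<longleftrightarrow> length (filter (\<lambda>a. a = L) w) = length (filter (\<lambda>a. a = R) w)"

definition prime_word :: "word \<Rightarrow> bool" where
  "prime_word w \<longleftrightarrow> w \<noteq> [] \<and> balanced w \<and>
     \<not> (\<exists>u v. u \<noteq> [] \<and> v \<noteq> [] \<and> balanced u \<and> balanced v \<and> w = u @ v)"

fun lval :: "letter \<Rightarrow> int" where
  "lval R = 1"
| "lval L = -1"

text \<open>e k W = sum of the bar-values of the first k letters (letters a_1..a_k = w!0..w!(k-1)).\<close>
definition e :: "nat \<Rightarrow> word \<Rightarrow> int" where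
  "e k w = (\<Sum>i<k. lval (w ! i))"

definition upper_prime :: "word \<Rightarrow> bool" where
  "upper_prime P \<longleftrightarrow> prime_word P \<and> (\<forall>k. 1 \<le> k \<and> k \<le> length P - 1 \<longrightarrow> e k P > 0)"

end

theory Submission
  imports Defs
begin

(* Upper primes are exactly the words R D L with D a Dyck word (all prefix heights
   nonnegative, total height zero). A Dyck word factors into upper primes, so modulo the
   ideal every Dyck word commutes with LR. Consequently R A L R C L = R A C L R L and
   R C L R A L = R C A L R L modulo the ideal, i.e. the upper primes R A L and R C L
   commute as soon as the Dyck words A and C do. A strong induction on total length,
   splitting off the first upper prime of each factor, then shows that any two Dyck
   words commute. *)

lemma amul_eq_sum_over_supersets:
  assumes "finite A" "Poly_Mapping.keys p \<subseteq> A" "finite B" "Poly_Mapping.keys q \<subseteq> B"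
  shows "amul p q =
    (\<Sum>u\<in>A. \<Sum>v\<in>B. Poly_Mapping.single (u @ v) (Poly_Mapping.lookup p u * Poly_Mapping.lookup q v))"
  unfolding amul_def using assms
  by (intro sum.mono_neutral_cong_left sum.mono_neutral_left) (auto simp: in_keys_iff)

lemma amul_diff_right: "amul p (q - r) = amul p q - amul p r"
proof -
  let ?A = "Poly_Mapping.keys p" and ?B = "Poly_Mapping.keys q \<union> Poly_Mapping.keys r"
  have "Poly_Mapping.keys (q - r) \<subseteq> ?B" by (rule keys_diff)
  then show ?thesis
    by (simp add: amul_eq_sum_over_supersets[of ?A _ ?B] lookup_minus right_diff_distrib
        single_diff sum_subtractf)
qed

lemma amul_diff_left: "amul (p - q) r = amul p r - amul q r"
proof -
  let ?A = "Poly_Mapping.keys p \<union> Poly_Mapping.keys q" and ?B = "Poly_Mapping.keys r"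
  have "Poly_Mapping.keys (p - q) \<subseteq> ?A" by (rule keys_diff)
  then show ?thesis
    by (simp add: amul_eq_sum_over_supersets[of ?A _ ?B] lookup_minus left_diff_distrib
        single_diff sum_subtractf)
qed

lemma amul_single_single:
  "amul (Poly_Mapping.single u c) (Poly_Mapping.single v d) = Poly_Mapping.single (u @ v) (c * d)"
  by (simp add: amul_def)

lemma amul_wd_wd: "amul (wd u) (wd v) = wd (u @ v)"
  by (simp add: wd_def amul_single_single)

definition height :: "word \<Rightarrow> int" where
  "height w = sum_list (map lval w)"

lemma height_simps [simp]:
  "height [] = 0" "height (a # w) = lval a + height w" "height (u @ v) = height u + height v"
  by (simp_all add: height_def)

lemma e_eq_height_take: "k \<le> length w \<Longrightarrow> e k w = height (take k w)"
  by (simp add: e_def height_def sum_list_sum_nth atLeast0LessThan min_absorb1)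

lemma balanced_iff_height: "balanced w \<longleftrightarrow> height w = 0"
proof -
  have "height w = int (length (filter (\<lambda>a. a = R) w)) - int (length (filter (\<lambda>a. a = L) w))"
  proof (induction w)
    case (Cons a w)
    then show ?case by (cases a) auto
  qed simp
  then show ?thesis by (auto simp: balanced_def)
qed

lemma upper_prime_iff_heights:
  "upper_prime P \<longleftrightarrow>
     P \<noteq> [] \<and> height P = 0 \<and> (\<forall>k. 0 < k \<longrightarrow> k < length P \<longrightarrow> 0 < height (take k P))"
  (is "_ \<longleftrightarrow> _ \<and> _ \<and> ?prefixes")
proof (cases "P = []")
  case False
  have "(\<forall>k. 1 \<le> k \<and> k \<le> length P - 1 \<longrightarrow> 0 < e k P) \<longleftrightarrow> ?prefixes"
    using False by (auto simp: e_eq_height_take Suc_le_eq)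
  moreover have "\<not> (\<exists>u v. u \<noteq> [] \<and> v \<noteq> [] \<and> balanced u \<and> balanced v \<and> P = u @ v)"
    if ?prefixes
  proof
    assume "\<exists>u v. u \<noteq> [] \<and> v \<noteq> [] \<and> balanced u \<and> balanced v \<and> P = u @ v"
    then obtain u v where "u \<noteq> []" "v \<noteq> []" "balanced u" "P = u @ v" by blast
    with that show False by (auto simp: balanced_iff_height dest: spec[of _ "length u"])
  qed
  ultimately show ?thesis
    by (auto simp: upper_prime_def prime_word_def balanced_iff_height)
qed (simp add: upper_prime_def prime_word_def)

inductive dyck :: "word \<Rightarrow> bool" where
  Nil: "dyck []"
| wrap: "dyck A \<Longrightarrow> dyck B \<Longrightarrow> dyck (R # A @ L # B)"

lemma dyck_heights: "dyck w \<Longrightarrow> height w = 0 \<and> (\<forall>k. 0 \<le> height (take k w))"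
proof (induction rule: dyck.induct)
  case (wrap A B)
  have "0 \<le> height (take k (R # A @ L # B))" for k
  proof (cases k)
    case (Suc j)
    then show ?thesis
      using wrap.IH by (cases "j \<le> length A") (auto simp: take_Cons' not_le)
  qed simp
  with wrap.IH show ?case by simp
qed simp

text \<open>\<open>dyck_tail n w\<close> means \<open>w = B\<^sub>0 L B\<^sub>1 L \<dots> L B\<^sub>n\<close> with Dyck words \<open>B\<^sub>i\<close>:
  \<open>w\<close> closes \<open>n\<close> pending \<open>R\<close>'s. This is the invariant for reading a word with
  nonnegative prefix heights from left to right.\<close>
fun dyck_tail :: "nat \<Rightarrow> word \<Rightarrow> bool" where
  "dyck_tail 0 w = dyck w"
| "dyck_tail (Suc n) w = (\<exists>B w'. dyck B \<and> w = B @ L # w' \<and> dyck_tail n w')"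

lemma dyck_tail_Cons_R: "dyck_tail (Suc n) w \<Longrightarrow> dyck_tail n (R # w)"
proof -
  assume "dyck_tail (Suc n) w"
  then obtain B w' where B: "dyck B" "w = B @ L # w'" "dyck_tail n w'" by auto
  show ?thesis
  proof (cases n)
    case 0
    with B show ?thesis by (auto intro: dyck.wrap)
  next
    case (Suc m)
    with B obtain B' w'' where B': "dyck B'" "w' = B' @ L # w''" "dyck_tail m w''" by auto
    have "dyck (R # B @ L # B')" using B B' by (intro dyck.wrap)
    moreover have "R # w = (R # B @ L # B') @ L # w''" using B B' by simp
    ultimately show ?thesis using B' Suc by auto
  qed
qed

lemma heights_imp_dyck_tail:
  "(\<forall>k. 0 \<le> int n + height (take k w)) \<Longrightarrow> int n + height w = 0 \<Longrightarrow> dyck_tail n w"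
proof (induction w arbitrary: n)
  case (Cons a w)
  have prefixes: "0 \<le> lval a + int n + height (take k w)" for k
    using Cons.prems(1)[rule_format, of "Suc k"] by simp
  show ?case
  proof (cases a)
    case L
    with Cons.prems(1) obtain m where m: "n = Suc m"
      by (cases n) (auto dest: spec[of _ 1])
    with L prefixes Cons.prems(2) have "dyck_tail m w" by (intro Cons.IH) auto
    with L m show ?thesis by (auto intro: exI[of _ "[]"] dyck.Nil)
  next
    case R
    with prefixes Cons.prems(2) have "dyck_tail (Suc n) w" by (intro Cons.IH) auto
    with R show ?thesis by (simp add: dyck_tail_Cons_R)
  qed
qed (simp add: dyck.Nil)

lemma dyck_iff_heights: "dyck w \<longleftrightarrow> height w = 0 \<and> (\<forall>k. 0 \<le> height (take k w))"
  using dyck_heights heights_imp_dyck_tail[of 0 w] by auto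

lemma upper_prime_imp_dyck:
  assumes "upper_prime P"
  shows "dyck P"
proof -
  have "0 \<le> height (take k P)" for k
    using assms by (cases "k = 0"; cases "k < length P")
      (auto simp: upper_prime_iff_heights intro: less_imp_le)
  with assms show ?thesis by (simp add: dyck_iff_heights upper_prime_iff_heights)
qed

lemma upper_prime_wrap: "dyck A \<Longrightarrow> upper_prime (R # A @ [L])"
  by (auto simp: upper_prime_iff_heights dyck_iff_heights take_Cons' add_pos_nonneg)

definition word_cong :: "alg set \<Rightarrow> word \<Rightarrow> word \<Rightarrow> bool" where
  "word_cong S u v \<longleftrightarrow> wd u - wd v \<in> ideal_gen S"

lemma word_cong_refl: "word_cong S u u"
  by (simp add: word_cong_def ideal_gen.zero)

lemma word_cong_trans [trans]: "word_cong S u v \<Longrightarrow> word_cong S v w \<Longrightarrow> word_cong S u w"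
  unfolding word_cong_def by (drule (1) ideal_gen.add) simp

lemma word_cong_sym: "word_cong S u v \<Longrightarrow> word_cong S v u"
proof -
  assume "word_cong S u v"
  then have "amul (Poly_Mapping.single [] (-1)) (wd u - wd v) \<in> ideal_gen S"
    unfolding word_cong_def by (rule ideal_gen.lmul)
  moreover have "amul (Poly_Mapping.single [] (-1)) (wd u - wd v) = wd v - wd u"
    by (simp only: amul_diff_right amul_single_single wd_def) (simp add: single_uminus)
  ultimately show ?thesis by (simp add: word_cong_def)
qed

lemma word_cong_context: "word_cong S u v \<Longrightarrow> word_cong S (x @ u @ y) (x @ v @ y)"
proof -
  assume "word_cong S u v"
  then have "amul (amul (wd x) (wd u - wd v)) (wd y) \<in> ideal_gen S"
    unfolding word_cong_def by (intro ideal_gen.rmul ideal_gen.lmul)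
  then show ?thesis
    by (simp add: word_cong_def amul_diff_right amul_diff_left amul_wd_wd)
qed

definition upper_LR_commutators :: "alg set" where
  "upper_LR_commutators = {amul (wd U) (wd [L, R]) - amul (wd [L, R]) (wd U) | U. upper_prime U}"

abbreviation upper_LR_cong :: "word \<Rightarrow> word \<Rightarrow> bool" (infix \<open>\<sim>\<close> 50) where
  "u \<sim> v \<equiv> word_cong upper_LR_commutators u v"

lemma dyck_LR_commute: "dyck D \<Longrightarrow> D @ [L, R] \<sim> [L, R] @ D"
proof (induction rule: dyck.induct)
  case (wrap A B)
  define U where "U = R # A @ [L]"
  have "upper_prime U" using wrap.hyps(1) by (simp add: U_def upper_prime_wrap)
  then have generator: "U @ [L, R] \<sim> [L, R] @ U"
    unfolding word_cong_def upper_LR_commutators_def amul_wd_wd[symmetric]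
    by (blast intro: ideal_gen.gen)
  have "U @ B @ [L, R] \<sim> U @ [L, R] @ B"
    using word_cong_context[OF wrap.IH(2), of U "[]"] by simp
  also have "\<dots> \<sim> [L, R] @ U @ B"
    using word_cong_context[OF generator, of "[]" B] by simp
  finally show ?case by (simp add: U_def)
qed (simp add: word_cong_refl)

lemma wrapped_commute:
  assumes "dyck A" "dyck C" "A @ C \<sim> C @ A"
  shows "(R # A @ [L]) @ (R # C @ [L]) \<sim> (R # C @ [L]) @ (R # A @ [L])"
proof -
  have "(R # A @ [L]) @ (R # C @ [L]) \<sim> [R] @ (A @ C) @ [L, R, L]"
    using word_cong_context[OF word_cong_sym[OF dyck_LR_commute[OF assms(2)]], of "R # A" "[L]"]
    by simp
  also have "\<dots> \<sim> [R] @ (C @ A) @ [L, R, L]"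
    by (rule word_cong_context[OF assms(3)])
  also have "\<dots> \<sim> (R # C @ [L]) @ (R # A @ [L])"
    using word_cong_context[OF dyck_LR_commute[OF assms(1)], of "R # C" "[L]"] by simp
  finally show ?thesis .
qed

lemma dyck_commute: "dyck D \<Longrightarrow> dyck E \<Longrightarrow> D @ E \<sim> E @ D"
proof (induction "length D + length E" arbitrary: D E rule: less_induct)
  case less
  show ?case
  proof (cases "D = [] \<or> E = []")
    case True
    then show ?thesis by (auto simp: word_cong_refl)
  next
    case False
    from less.prems(1) False obtain A B
      where A: "dyck A" and B: "dyck B" and D: "D = R # A @ L # B"
      by (cases rule: dyck.cases) auto
    from less.prems(2) False obtain C F
      where C: "dyck C" and F: "dyck F" and E: "E = R # C @ L # F"
      by (cases rule: dyck.cases) auto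
    define P Q where "P = R # A @ [L]" and "Q = R # C @ [L]"
    have "dyck Q" using dyck.wrap[OF C dyck.Nil] by (simp add: Q_def)
    have "D @ E = P @ (B @ Q) @ F" by (simp add: D E P_def Q_def)
    also have "\<dots> \<sim> P @ (Q @ B) @ F"
      using less.hyps[OF _ B \<open>dyck Q\<close>] by (intro word_cong_context) (simp add: D E Q_def)
    also have "\<dots> = [] @ (P @ Q) @ B @ F" by simp
    also have "\<dots> \<sim> [] @ (Q @ P) @ B @ F"
      using less.hyps[OF _ A C] unfolding P_def Q_def
      by (intro word_cong_context wrapped_commute A C) (simp add: D E)
    also have "\<dots> = Q @ (D @ F) @ []" by (simp add: D P_def)
    also have "\<dots> \<sim> Q @ (F @ D) @ []"
      using less.hyps[OF _ less.prems(1) F] by (intro word_cong_context) (simp add: E)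
    also have "\<dots> = E @ D" by (simp add: E Q_def)
    finally show ?thesis .
  qed
qed

theorem lemma5p1:
  assumes "upper_prime P" and "upper_prime Q"
  shows "amul (wd P) (wd Q) - amul (wd Q) (wd P) \<in>
    ideal_gen {amul (wd U) (wd [L, R]) - amul (wd [L, R]) (wd U) | U. upper_prime U}"
proof -
  have "P @ Q \<sim> Q @ P"
    using assms by (intro dyck_commute upper_prime_imp_dyck)
  then show ?thesis
    unfolding word_cong_def upper_LR_commutators_def amul_wd_wd .
qed

end
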